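(* In the setting below, $\tilde p_2\,p^s\,\pi=0$ on $\operatorname{Char}P$.
   Context: $\rho,p:\mathbb R^3\to\mathbb R$, $H:\mathbb R^3\to\mathbb R^3$ are smooth, time-independent, $\rho>0$, $\gamma$ constant, with the stationary equilibrium relation $\nabla p+H\times\operatorname{curl}H=0$; $c^2=\gamma p/\rho>0$, $0<|H|^2\ne\rho c^2$, and only points with $\xi\cdot H\neq0$, $\xi\times H\ne0$ are considered. $P$ is the $3\times3$ operator on $\mathbb R_t\times\mathbb R^3_x$: $P\beta=-\rho\partial_t^2\beta+\gamma\nabla(p\operatorname{div}\beta)+\nabla(\beta\cdot\nabla p)+(\nabla\times(\nabla\times(\beta\times H)))\times H+(\nabla\times H)\times(\nabla\times(\beta\times H))$. Its full symbol (convention $\partial\mapsto i\xi$, i.e. $P(e^{i(t\tau+x\cdot\xi)}v)=e^{i(t\tau+x\cdot\xi)}(p_2+p_1+p_0)v$) is $p_2+p_1+p_0$, $p_j$ homogeneous of degree $j$ in $(\tau,\xi)$, with $p_2=(\rho\tau^2-(H\cdot\xi)^2)\operatorname{Id}_3-(\gamma p+|H|^2)\xi\otimes\xi+(H\cdot\xi)(\xi\otimes H+H\otimes\xi)$. The subprincipal symbol is $p^s=p_1-\frac1{2i}\sum_j\partial_{x_j}\partial_{\xi_j}p_2$. Let $q_1=\rho\tau^2-(H\cdot\xi)^2$, $q_2=\rho(\tau^2-c_s^2)$, $q_3=\rho(\tau^2-c_f^2)$ with $c_{f,s}^2(x,\xi)=\tfrac12\big((c^2+h^2)|\xi|^2\pm\sqrt{(c^2-h^2)^2|\xi|^4+4b^2c^2|\xi|^2}\big)$,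 $h^2=|H|^2/\rho$, $b^2=|\xi\times H|^2/\rho$; $\operatorname{Char}P=\{q_1=0\}\cup\{q_2=0\}\cup\{q_3=0\}$. Let $w^2=|H|^2\xi\otimes\xi+|\xi|^2H\otimes H-(H\cdot\xi)(H\otimes\xi+\xi\otimes H)$, $\pi_1=\operatorname{Id}_3+\frac{w^2}{(H\cdot\xi)^2-|H|^2|\xi|^2}$, $\pi_2=\frac{1}{\rho c_s^2-\rho c_f^2}\Big((\gamma p+|H|^2)\xi\otimes\xi-(H\cdot\xi)(\xi\otimes H+H\otimes\xi)+\frac{(H\cdot\xi)^2w^2}{\rho c_s^2-(H\cdot\xi)^2}\Big)$, $\pi_3=\frac{1}{\rho c_f^2-\rho c_s^2}\Big((\gamma p+|H|^2)\xi\otimes\xi-(H\cdot\xi)(\xi\otimes H+H\otimes\xi)+\frac{(H\cdot\xi)^2w^2}{\rho c_f^2-(H\cdot\xi)^2}\Big)$. With $\Gamma_1,\Gamma_2,\Gamma_3$ pairwise disjoint conic neighborhoods of $\{q_1=0\},\{q_2=0\},\{q_3=0\}$, on $\Gamma_j$ set $\pi=\pi_j$ and $\tilde p_2=\pi_j+\sum_{k\ne j}\frac{q_j}{q_k}\pi_k$ (so $\tilde p_2p_2=q_j\operatorname{Id}_3$ there). *)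

theory Defs
  imports "HOL-Analysis.Analysis"
begin

definition pd :: "(real^3 \<Rightarrow> 'b::real_normed_vector) \<Rightarrow> 3 \<Rightarrow> real^3 \<Rightarrow> 'b" where
  "pd f j x = vector_derivative (\<lambda>s. f (x + s *\<^sub>R axis j 1)) (at 0)"

inductive_set pderivs :: "(real^3 \<Rightarrow> 'b::real_normed_vector) \<Rightarrow> (real^3 \<Rightarrow> 'b) set"
  for f where
  base: "f \<in> pderivs f"
| step: "g \<in> pderivs f \<Longrightarrow> (\<lambda>x. pd g j x) \<in> pderivs f"

definition smooth3 :: "(real^3 \<Rightarrow> 'b::real_normed_vector) \<Rightarrow> bool" where
  "smooth3 f \<longleftrightarrow> (\<forall>g\<in>pderivs f. continuous_on UNIV g \<and> (\<forall>x. g differentiable (at x)))"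

definition grad3 :: "(real^3 \<Rightarrow> 'a::real_normed_vector) \<Rightarrow> real^3 \<Rightarrow> 'a^3" where
  "grad3 f x = (\<chi> j. pd f j x)"

definition div3 :: "(real^3 \<Rightarrow> 'a::real_normed_vector^3) \<Rightarrow> real^3 \<Rightarrow> 'a" where
  "div3 F x = (\<Sum>j\<in>UNIV. pd (\<lambda>y. F y $ j) j x)"

definition curl3 :: "(real^3 \<Rightarrow> 'a::real_normed_vector^3) \<Rightarrow> real^3 \<Rightarrow> 'a^3" where
  "curl3 F x = vector [pd (\<lambda>y. F y $ 3) 2 x - pd (\<lambda>y. F y $ 2) 3 x,
                       pd (\<lambda>y. F y $ 1) 3 x - pd (\<lambda>y. F y $ 3) 1 x,
                       pd (\<lambda>y. F y $ 2) 1 x - pd (\<lambda>y. F y $ 1) 2 x]"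

definition crossv :: "'a::ring^3 \<Rightarrow> 'a^3 \<Rightarrow> 'a^3" where
  "crossv u v = vector [u$2 * v$3 - u$3 * v$2, u$3 * v$1 - u$1 * v$3, u$1 * v$2 - u$2 * v$1]"

definition cvec :: "real^3 \<Rightarrow> complex^3" where
  "cvec v = (\<chi> i. complex_of_real (v $ i))"

definition cmat :: "real^3^3 \<Rightarrow> complex^3^3" where
  "cmat M = (\<chi> i j. complex_of_real (M $ i $ j))"

definition cscale :: "complex \<Rightarrow> complex^3 \<Rightarrow> complex^3" where
  "cscale c v = (\<chi> i. c * v $ i)"

definition cmscale :: "complex \<Rightarrow> complex^3^3 \<Rightarrow> complex^3^3" where
  "cmscale c M = (\<chi> i j. c * M $ i $ j)"

definition outer :: "real^3 \<Rightarrow> real^3 \<Rightarrow> real^3^3" where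
  "outer u v = (\<chi> i j. u $ i * v $ j)"

section \<open>The operator P and its full symbol\<close>

definition dt :: "(real \<Rightarrow> real^3 \<Rightarrow> complex^3) \<Rightarrow> real \<Rightarrow> real^3 \<Rightarrow> complex^3" where
  "dt \<beta> t x = vector_derivative (\<lambda>s. \<beta> (t + s) x) (at 0)"

definition Pop :: "(real^3 \<Rightarrow> real) \<Rightarrow> (real^3 \<Rightarrow> real) \<Rightarrow> (real^3 \<Rightarrow> real^3) \<Rightarrow> real
     \<Rightarrow> (real \<Rightarrow> real^3 \<Rightarrow> complex^3) \<Rightarrow> real \<Rightarrow> real^3 \<Rightarrow> complex^3" where
  "Pop \<rho> p H \<gamma> \<beta> t x =
     cscale (- complex_of_real (\<rho> x)) (dt (dt \<beta>) t x)
   + cscale (complex_of_real \<gamma>) (grad3 (\<lambda>y. complex_of_real (p y) * div3 (\<beta> t) y) x)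
   + grad3 (\<lambda>y. \<Sum>j\<in>UNIV. \<beta> t y $ j * complex_of_real (pd p j y)) x
   + crossv (curl3 (curl3 (\<lambda>y. crossv (\<beta> t y) (cvec (H y)))) x) (cvec (H x))
   + crossv (curl3 (\<lambda>y. cvec (H y)) x) (curl3 (\<lambda>y. crossv (\<beta> t y) (cvec (H y))) x)"

text \<open>Full symbol sigma(x,tau,xi), convention d -> i xi:
  P(e^{i(t tau + x.xi)} v) = e^{i(t tau + x.xi)} sigma v.  Column k is obtained with v = e_k,
  evaluated at t = 0 (coefficients are time independent).\<close>
definition fullsym :: "(real^3 \<Rightarrow> real) \<Rightarrow> (real^3 \<Rightarrow> real) \<Rightarrow> (real^3 \<Rightarrow> real^3) \<Rightarrow> real
     \<Rightarrow> real^3 \<Rightarrow> real \<Rightarrow> real^3 \<Rightarrow> complex^3^3" where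
  "fullsym \<rho> p H \<gamma> x \<tau> \<xi> = (\<chi> i k.
     exp (- \<i> * complex_of_real (x \<bullet> \<xi>)) *
     Pop \<rho> p H \<gamma> (\<lambda>t y. cscale (exp (\<i> * complex_of_real (t * \<tau> + y \<bullet> \<xi>))) (axis k 1)) 0 x $ i)"

text \<open>The full symbol is p2 + p1 + p0 with p_j homogeneous of degree j in (tau, xi);
  p2, p0 are even and p1 odd, so p1 is the odd part of the full symbol.\<close>
definition p1sym :: "(real^3 \<Rightarrow> real) \<Rightarrow> (real^3 \<Rightarrow> real) \<Rightarrow> (real^3 \<Rightarrow> real^3) \<Rightarrow> real
     \<Rightarrow> real^3 \<Rightarrow> real \<Rightarrow> real^3 \<Rightarrow> complex^3^3" where
  "p1sym \<rho> p H \<gamma> x \<tau> \<xi> = (1/2) *\<^sub>R (fullsym \<rho> p H \<gamma> x \<tau> \<xi> - fullsym \<rho> p H \<gamma> x (-\<tau>) (-\<xi>))"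

definition p2sym :: "(real^3 \<Rightarrow> real) \<Rightarrow> (real^3 \<Rightarrow> real) \<Rightarrow> (real^3 \<Rightarrow> real^3) \<Rightarrow> real
     \<Rightarrow> real^3 \<Rightarrow> real \<Rightarrow> real^3 \<Rightarrow> real^3^3" where
  "p2sym \<rho> p H \<gamma> x \<tau> \<xi> =
     (\<rho> x * \<tau>^2 - (H x \<bullet> \<xi>)^2) *\<^sub>R mat 1
     - (\<gamma> * p x + (norm (H x))^2) *\<^sub>R outer \<xi> \<xi>
     + (H x \<bullet> \<xi>) *\<^sub>R (outer \<xi> (H x) + outer (H x) \<xi>)"

definition psub :: "(real^3 \<Rightarrow> real) \<Rightarrow> (real^3 \<Rightarrow> real) \<Rightarrow> (real^3 \<Rightarrow> real^3) \<Rightarrow> real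
     \<Rightarrow> real^3 \<Rightarrow> real \<Rightarrow> real^3 \<Rightarrow> complex^3^3" where
  "psub \<rho> p H \<gamma> x \<tau> \<xi> = p1sym \<rho> p H \<gamma> x \<tau> \<xi>
     - cmscale (1 / (2 * \<i>))
         (cmat (\<Sum>j\<in>UNIV. pd (\<lambda>y. pd (\<lambda>\<eta>. p2sym \<rho> p H \<gamma> y \<tau> \<eta>) j \<xi>) j x))"

section \<open>Characteristic factors and projections\<close>

definition csq :: "(real^3 \<Rightarrow> real) \<Rightarrow> (real^3 \<Rightarrow> real) \<Rightarrow> real \<Rightarrow> real^3 \<Rightarrow> real" where
  "csq \<rho> p \<gamma> x = \<gamma> * p x / \<rho> x"

definition hsq :: "(real^3 \<Rightarrow> real) \<Rightarrow> (real^3 \<Rightarrow> real^3) \<Rightarrow> real^3 \<Rightarrow> real" where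
  "hsq \<rho> H x = (norm (H x))^2 / \<rho> x"

definition bsq :: "(real^3 \<Rightarrow> real) \<Rightarrow> (real^3 \<Rightarrow> real^3) \<Rightarrow> real^3 \<Rightarrow> real^3 \<Rightarrow> real" where
  "bsq \<rho> H x \<xi> = (norm (crossv \<xi> (H x)))^2 / \<rho> x"

definition discr :: "(real^3 \<Rightarrow> real) \<Rightarrow> (real^3 \<Rightarrow> real) \<Rightarrow> (real^3 \<Rightarrow> real^3) \<Rightarrow> real
     \<Rightarrow> real^3 \<Rightarrow> real^3 \<Rightarrow> real" where
  "discr \<rho> p H \<gamma> x \<xi> = sqrt ((csq \<rho> p \<gamma> x - hsq \<rho> H x)^2 * (norm \<xi>)^4
        + 4 * bsq \<rho> H x \<xi> * csq \<rho> p \<gamma> x * (norm \<xi>)^2)"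

definition cfsq :: "(real^3 \<Rightarrow> real) \<Rightarrow> (real^3 \<Rightarrow> real) \<Rightarrow> (real^3 \<Rightarrow> real^3) \<Rightarrow> real
     \<Rightarrow> real^3 \<Rightarrow> real^3 \<Rightarrow> real" where
  "cfsq \<rho> p H \<gamma> x \<xi> = ((csq \<rho> p \<gamma> x + hsq \<rho> H x) * (norm \<xi>)^2 + discr \<rho> p H \<gamma> x \<xi>) / 2"

definition cssq :: "(real^3 \<Rightarrow> real) \<Rightarrow> (real^3 \<Rightarrow> real) \<Rightarrow> (real^3 \<Rightarrow> real^3) \<Rightarrow> real
     \<Rightarrow> real^3 \<Rightarrow> real^3 \<Rightarrow> real" where
  "cssq \<rho> p H \<gamma> x \<xi> = ((csq \<rho> p \<gamma> x + hsq \<rho> H x) * (norm \<xi>)^2 - discr \<rho> p H \<gamma> x \<xi>) / 2"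

definition qfac :: "(real^3 \<Rightarrow> real) \<Rightarrow> (real^3 \<Rightarrow> real) \<Rightarrow> (real^3 \<Rightarrow> real^3) \<Rightarrow> real
     \<Rightarrow> nat \<Rightarrow> real^3 \<Rightarrow> real \<Rightarrow> real^3 \<Rightarrow> real" where
  "qfac \<rho> p H \<gamma> j x \<tau> \<xi> =
     (if j = 1 then \<rho> x * \<tau>^2 - (H x \<bullet> \<xi>)^2
      else if j = 2 then \<rho> x * (\<tau>^2 - cssq \<rho> p H \<gamma> x \<xi>)
      else \<rho> x * (\<tau>^2 - cfsq \<rho> p H \<gamma> x \<xi>))"

definition wsq :: "(real^3 \<Rightarrow> real^3) \<Rightarrow> real^3 \<Rightarrow> real^3 \<Rightarrow> real^3^3" where
  "wsq H x \<xi> = (norm (H x))^2 *\<^sub>R outer \<xi> \<xi> + (norm \<xi>)^2 *\<^sub>R outer (H x) (H x)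
       - (H x \<bullet> \<xi>) *\<^sub>R (outer (H x) \<xi> + outer \<xi> (H x))"

definition proj :: "(real^3 \<Rightarrow> real) \<Rightarrow> (real^3 \<Rightarrow> real) \<Rightarrow> (real^3 \<Rightarrow> real^3) \<Rightarrow> real
     \<Rightarrow> nat \<Rightarrow> real^3 \<Rightarrow> real^3 \<Rightarrow> real^3^3" where
  "proj \<rho> p H \<gamma> j x \<xi> =
     (let A = (\<gamma> * p x + (norm (H x))^2) *\<^sub>R outer \<xi> \<xi>
              - (H x \<bullet> \<xi>) *\<^sub>R (outer \<xi> (H x) + outer (H x) \<xi>);
          rs = \<rho> x * cssq \<rho> p H \<gamma> x \<xi>;
          rf = \<rho> x * cfsq \<rho> p H \<gamma> x \<xi>;
          hx = (H x \<bullet> \<xi>)^2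
      in if j = 1 then mat 1 + (1 / (hx - (norm (H x))^2 * (norm \<xi>)^2)) *\<^sub>R wsq H x \<xi>
         else if j = 2 then (1 / (rs - rf)) *\<^sub>R (A + (hx / (rs - hx)) *\<^sub>R wsq H x \<xi>)
         else (1 / (rf - rs)) *\<^sub>R (A + (hx / (rf - hx)) *\<^sub>R wsq H x \<xi>))"

definition ptilde :: "(real^3 \<Rightarrow> real) \<Rightarrow> (real^3 \<Rightarrow> real) \<Rightarrow> (real^3 \<Rightarrow> real^3) \<Rightarrow> real
     \<Rightarrow> nat \<Rightarrow> real^3 \<Rightarrow> real \<Rightarrow> real^3 \<Rightarrow> real^3^3" where
  "ptilde \<rho> p H \<gamma> j x \<tau> \<xi> = proj \<rho> p H \<gamma> j x \<xi>
     + (\<Sum>k\<in>{1,2,3} - {j}. (qfac \<rho> p H \<gamma> j x \<tau> \<xi> / qfac \<rho> p H \<gamma> k x \<tau> \<xi>) *\<^sub>R proj \<rho> p H \<gamma> k x \<xi>)"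

end

theory Submission
  imports Defs
begin

text \<open>
  On Char P the factor q_j vanishes, so tilde p_2 = pi_j and the claim reads pi_j p^s pi_j = 0.
  Each pi_j is a real matrix of the form c u u^T: for pi_1 take u = xi x H, while for pi_2 and
  pi_3 the combination in the definition is a perfect square because rho c_s^2 and rho c_f^2
  are the roots of r^2 - (gamma p + |H|^2) |xi|^2 r + gamma p (H.xi)^2 |xi|^2.  Evaluating P
  on plane waves shows that p^s = i M with M real, and the equilibrium relation
  grad p = (curl H) x H makes M antisymmetric.  Hence pi_j p^s pi_j = i c^2 (u^T M u) u u^T = 0.
\<close>

section \<open>Partial derivatives, cross products and curls\<close>

lemma pd_eq_derivative:
  assumes "(f has_derivative f') (at x)"
  shows "pd f j x = f' (axis j 1)"
proof -
  have "((\<lambda>s::real. x + s *\<^sub>R axis j 1) has_derivative (\<lambda>s. s *\<^sub>R axis j 1)) (at 0)"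
    by (auto intro!: derivative_eq_intros)
  then have "((\<lambda>s. f (x + s *\<^sub>R axis j 1)) has_derivative (\<lambda>s. f' (s *\<^sub>R axis j 1))) (at 0)"
    using has_derivative_compose[of "\<lambda>s::real. x + s *\<^sub>R axis j 1" _ 0 UNIV f f'] assms by simp
  moreover have "(\<lambda>s. f' (s *\<^sub>R axis j 1)) = (\<lambda>s. s *\<^sub>R f' (axis j 1))"
    using assms has_derivative_bounded_linear linear_cmul[of f'] bounded_linear.linear by blast
  ultimately show ?thesis unfolding pd_def
    by (intro vector_derivative_at) (simp add: has_vector_derivative_def)
qed

lemma pd_bounded_linear:
  assumes "bounded_linear L" and "f differentiable (at x)"
  shows "pd (\<lambda>y. L (f y)) j x = L (pd f j x)"
proof -
  obtain f' where f': "(f has_derivative f') (at x)" using assms(2) by (auto simp: differentiable_def)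
  show ?thesis
    using pd_eq_derivative[OF bounded_linear.has_derivative[OF assms(1) f']] pd_eq_derivative[OF f']
    by simp
qed

lemma pd_bounded_bilinear:
  assumes "bounded_bilinear b" and "f differentiable (at x)" and "g differentiable (at x)"
  shows "pd (\<lambda>y. b (f y) (g y)) j x = b (pd f j x) (g x) + b (f x) (pd g j x)"
proof -
  obtain f' where f': "(f has_derivative f') (at x)" using assms(2) by (auto simp: differentiable_def)
  obtain g' where g': "(g has_derivative g') (at x)" using assms(3) by (auto simp: differentiable_def)
  show ?thesis
    using pd_eq_derivative[OF bounded_bilinear.FDERIV[OF assms(1) f' g']]
      pd_eq_derivative[OF f'] pd_eq_derivative[OF g']
    by (simp add: add.commute)
qed

lemma differentiable_bounded_linear:
  assumes "bounded_linear L" and "f differentiable (at x)"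
  shows "(\<lambda>y. L (f y)) differentiable (at x)"
  using bounded_linear.has_derivative[OF assms(1)] assms(2) by (auto simp: differentiable_def)

lemma differentiable_bounded_bilinear:
  assumes "bounded_bilinear b" and "f differentiable (at x)" and "g differentiable (at x)"
  shows "(\<lambda>y. b (f y) (g y)) differentiable (at x)"
proof -
  obtain f' where f': "(f has_derivative f') (at x)" using assms(2) by (auto simp: differentiable_def)
  obtain g' where g': "(g has_derivative g') (at x)" using assms(3) by (auto simp: differentiable_def)
  show ?thesis using bounded_bilinear.FDERIV[OF assms(1) f' g'] by (auto simp: differentiable_def)
qed

lemma bounded_bilinear_crossv: "bounded_bilinear (crossv :: real^3 \<Rightarrow> real^3 \<Rightarrow> real^3)"
  unfolding bilinear_conv_bounded_bilinear[symmetric] bilinear_def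
  by (auto intro!: linearI simp: crossv_def vec_eq_iff algebra_simps forall_3)

lemma bounded_bilinear_outer: "bounded_bilinear outer"
  unfolding bilinear_conv_bounded_bilinear[symmetric] bilinear_def
  by (auto intro!: linearI simp: outer_def vec_eq_iff algebra_simps)

lemma bounded_bilinear_cscale: "bounded_bilinear cscale"
  unfolding bilinear_conv_bounded_bilinear[symmetric] bilinear_def
  by (auto intro!: linearI simp: cscale_def vec_eq_iff algebra_simps)

lemma pd_const [simp]: "pd (\<lambda>y. c) j x = 0"
  using pd_eq_derivative[of "\<lambda>y. c" "\<lambda>h. 0" x j] by simp

lemma pd_ident [simp]: "pd (\<lambda>y. y) j x = axis j 1"
  using pd_eq_derivative[of "\<lambda>y. y" "\<lambda>h. h" x j] by simp

lemma pd_add [simp]: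
  assumes "f differentiable (at x)" and "g differentiable (at x)"
  shows "pd (\<lambda>y. f y + g y) j x = pd f j x + pd g j x"
proof -
  obtain f' where f': "(f has_derivative f') (at x)" using assms(1) by (auto simp: differentiable_def)
  obtain g' where g': "(g has_derivative g') (at x)" using assms(2) by (auto simp: differentiable_def)
  show ?thesis
    using pd_eq_derivative[OF has_derivative_add[OF f' g']]
      pd_eq_derivative[OF f'] pd_eq_derivative[OF g']
    by simp
qed

lemma pd_minus [simp]:
  assumes "f differentiable (at x)"
  shows "pd (\<lambda>y. - f y) j x = - pd f j x"
proof -
  obtain f' where f': "(f has_derivative f') (at x)" using assms by (auto simp: differentiable_def)
  show ?thesis using pd_eq_derivative[OF has_derivative_minus[OF f']] pd_eq_derivative[OF f'] by simp
qed

lemma pd_diff [simp]: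
  assumes "f differentiable (at x)" and "g differentiable (at x)"
  shows "pd (\<lambda>y. f y - g y) j x = pd f j x - pd g j x"
  using pd_add[of f x "\<lambda>y. - g y" j] assms by simp

lemma pd_sum [simp]:
  assumes "\<And>i. f i differentiable (at x)"
  shows "pd (\<lambda>y. \<Sum>i\<in>I. f i y) j x = (\<Sum>i\<in>I. pd (f i) j x)"
proof -
  have f': "(f i has_derivative frechet_derivative (f i) (at x)) (at x)" for i
    using assms by (simp add: frechet_derivative_works)
  show ?thesis using pd_eq_derivative[OF has_derivative_sum[OF f']] pd_eq_derivative[OF f'] by simp
qed

lemma pd_vec_nth [simp]: "f differentiable (at x) \<Longrightarrow> pd (\<lambda>y. f y $ i) j x = pd f j x $ i"
  using pd_bounded_linear[OF bounded_linear_vec_nth] .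

lemma pd_of_real [simp]:
  "f differentiable (at x) \<Longrightarrow> pd (\<lambda>y. complex_of_real (f y)) j x = of_real (pd f j x)"
  using pd_bounded_linear[OF bounded_linear_of_real] .

lemma pd_mult [simp]:
  fixes f g :: "real^3 \<Rightarrow> 'a::real_normed_algebra"
  shows "f differentiable (at x) \<Longrightarrow> g differentiable (at x) \<Longrightarrow>
    pd (\<lambda>y. f y * g y) j x = pd f j x * g x + f x * pd g j x"
  using pd_bounded_bilinear[OF bounded_bilinear_mult] .

lemma pd_scaleR [simp]:
  "f differentiable (at x) \<Longrightarrow> g differentiable (at x) \<Longrightarrow>
    pd (\<lambda>y. f y *\<^sub>R g y) j x = pd f j x *\<^sub>R g x + f x *\<^sub>R pd g j x"
  using pd_bounded_bilinear[OF bounded_bilinear_scaleR] .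

lemma pd_inner [simp]:
  "f differentiable (at x) \<Longrightarrow> g differentiable (at x) \<Longrightarrow>
    pd (\<lambda>y. f y \<bullet> g y) j x = pd f j x \<bullet> g x + f x \<bullet> pd g j x"
  using pd_bounded_bilinear[OF bounded_bilinear_inner] .

lemma pd_crossv [simp]:
  "f differentiable (at x) \<Longrightarrow> g differentiable (at x) \<Longrightarrow>
    pd (\<lambda>y. crossv (f y) (g y :: real^3)) j x = crossv (pd f j x) (g x) + crossv (f x) (pd g j x)"
  using pd_bounded_bilinear[OF bounded_bilinear_crossv] .

lemma pd_outer [simp]:
  "f differentiable (at x) \<Longrightarrow> g differentiable (at x) \<Longrightarrow>
    pd (\<lambda>y. outer (f y) (g y)) j x = outer (pd f j x) (g x) + outer (f x) (pd g j x)"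
  using pd_bounded_bilinear[OF bounded_bilinear_outer] .

lemma differentiable_vec_nth [simp]: "f differentiable (at x) \<Longrightarrow> (\<lambda>y. f y $ i) differentiable (at x)"
  using differentiable_bounded_linear[OF bounded_linear_vec_nth] .

lemma differentiable_of_real [simp]:
  "f differentiable (at x) \<Longrightarrow> (\<lambda>y. complex_of_real (f y)) differentiable (at x)"
  using differentiable_bounded_linear[OF bounded_linear_of_real] .

lemma differentiable_inner [simp]:
  "f differentiable (at x) \<Longrightarrow> g differentiable (at x) \<Longrightarrow> (\<lambda>y. f y \<bullet> g y) differentiable (at x)"
  using differentiable_bounded_bilinear[OF bounded_bilinear_inner] .

lemma differentiable_crossv [simp]:
  "f differentiable (at x) \<Longrightarrow> g differentiable (at x) \<Longrightarrow>
    (\<lambda>y. crossv (f y) (g y :: real^3)) differentiable (at x)"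
  using differentiable_bounded_bilinear[OF bounded_bilinear_crossv] .

lemma differentiable_outer [simp]:
  "f differentiable (at x) \<Longrightarrow> g differentiable (at x) \<Longrightarrow> (\<lambda>y. outer (f y) (g y)) differentiable (at x)"
  using differentiable_bounded_bilinear[OF bounded_bilinear_outer] .

lemma smooth3_differentiable: "smooth3 f \<Longrightarrow> f differentiable (at y)"
  unfolding smooth3_def using pderivs.base by blast

lemma smooth3_pd_differentiable: "smooth3 f \<Longrightarrow> pd f j differentiable (at y)"
  unfolding smooth3_def using pderivs.step[OF pderivs.base, of f j] by blast

lemma crossv_zero [simp]: "crossv 0 a = (0::real^3)" "crossv a 0 = (0::real^3)"
  by (simp_all add: crossv_def vec_eq_iff forall_3)

lemma crossv_minus [simp]:
  "crossv (- a) b = - crossv a (b::real^3)" "crossv a (- b) = - crossv a (b::real^3)"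
  by (simp_all add: crossv_def vec_eq_iff forall_3)

lemma crossv_add [simp]:
  "crossv (a + b) c = crossv a c + crossv b (c::real^3)"
  "crossv c (a + b) = crossv c a + crossv c (b::real^3)"
  by (simp_all add: crossv_def vec_eq_iff forall_3 algebra_simps)

lemma crossv_diff [simp]:
  "crossv (a - b) c = crossv a c - crossv b (c::real^3)"
  "crossv c (a - b) = crossv c a - crossv c (b::real^3)"
  by (simp_all add: crossv_def vec_eq_iff forall_3 algebra_simps)

lemma vector_zero3 [simp]: "(vector [0, 0, 0] :: real^3) = 0"
  by (simp add: vec_eq_iff forall_3)

lemma vector3_eq_axis: "(vector [a, b, c] :: real^3) = a *\<^sub>R axis 1 1 + b *\<^sub>R axis 2 1 + c *\<^sub>R axis 3 1"
  by (simp add: vec_eq_iff forall_3 axis_def)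

definition curl_of_partials :: "(3 \<Rightarrow> real^3) \<Rightarrow> real^3" where
  "curl_of_partials d = vector [d 2 $ 3 - d 3 $ 2, d 3 $ 1 - d 1 $ 3, d 1 $ 2 - d 2 $ 1]"

lemma curl3_eq_curl_of_partials:
  "F differentiable (at x) \<Longrightarrow> curl3 F x = curl_of_partials (\<lambda>j. pd F j x)"
  unfolding curl3_def curl_of_partials_def by simp

lemma differentiable_curl_of_partials [simp]:
  "(\<And>j. d j differentiable (at x)) \<Longrightarrow> (\<lambda>y. curl_of_partials (\<lambda>j. d j y)) differentiable (at x)"
  unfolding curl_of_partials_def vector3_eq_axis by simp

lemma pd_curl_of_partials [simp]:
  "(\<And>j. d j differentiable (at x)) \<Longrightarrow>
    pd (\<lambda>y. curl_of_partials (\<lambda>j. d j y)) i x = curl_of_partials (\<lambda>j. pd (d j) i x)"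
  unfolding curl_of_partials_def vector3_eq_axis by simp

lemma curl_of_partials_minus: "curl_of_partials (\<lambda>j. - d j) = - curl_of_partials d"
  by (simp add: curl_of_partials_def vec_eq_iff forall_3)

section \<open>The symbol of P on plane waves\<close>

definition cvec_re_im :: "real^3 \<Rightarrow> real^3 \<Rightarrow> complex^3" where
  "cvec_re_im a b = (\<chi> i. complex_of_real (a $ i) + \<i> * complex_of_real (b $ i))"

definition plane_wave :: "real \<Rightarrow> real^3 \<Rightarrow> real^3 \<Rightarrow> complex" where
  "plane_wave c \<xi> y = exp (\<i> * complex_of_real (c + y \<bullet> \<xi>))"

lemma cvec_re_im_nth [simp]:
  "cvec_re_im a b $ i = complex_of_real (a $ i) + \<i> * complex_of_real (b $ i)"
  by (simp add: cvec_re_im_def)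

lemma cscale_nth [simp]: "cscale c v $ i = c * v $ i"
  by (simp add: cscale_def)

lemma cvec_nth [simp]: "cvec v $ i = complex_of_real (v $ i)"
  by (simp add: cvec_def)

lemma plane_wave_has_derivative:
  "(plane_wave c \<xi> has_derivative (\<lambda>h. plane_wave c \<xi> x * (\<i> * complex_of_real (h \<bullet> \<xi>)))) (at x)"
proof -
  have "((\<lambda>y. \<i> * complex_of_real (c + y \<bullet> \<xi>)) has_derivative (\<lambda>h. \<i> * complex_of_real (h \<bullet> \<xi>))) (at x)"
    by (auto intro!: derivative_eq_intros)
  moreover have "(exp has_derivative (*) (exp (\<i> * complex_of_real (c + x \<bullet> \<xi>))))
      (at (\<i> * complex_of_real (c + x \<bullet> \<xi>)))"
    using DERIV_exp unfolding has_field_derivative_def by blast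
  ultimately show ?thesis unfolding plane_wave_def[abs_def] using has_derivative_compose by fastforce
qed

lemma differentiable_plane_wave [simp]: "plane_wave c \<xi> differentiable (at x)"
  using plane_wave_has_derivative by (auto simp: differentiable_def)

lemma pd_plane_wave [simp]: "pd (plane_wave c \<xi>) j x = plane_wave c \<xi> x * (\<i> * complex_of_real (\<xi> $ j))"
  using pd_eq_derivative[OF plane_wave_has_derivative] by (simp add: inner_axis')

lemma exp_time_has_derivative:
  "((\<lambda>s::real. exp (\<i> * complex_of_real ((t + s) * \<tau> + c))) has_derivative
    (\<lambda>h. h *\<^sub>R (\<i> * complex_of_real \<tau> * exp (\<i> * complex_of_real (t * \<tau> + c))))) (at 0)"
proof -
  have "((\<lambda>s::real. \<i> * complex_of_real ((t + s) * \<tau> + c)) has_derivative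
      (\<lambda>h. \<i> * complex_of_real (h * \<tau>))) (at 0)"
    by (auto intro!: derivative_eq_intros simp: algebra_simps)
  moreover have "(exp has_derivative (*) (exp (\<i> * complex_of_real ((t + 0) * \<tau> + c))))
      (at (\<i> * complex_of_real ((t + 0) * \<tau> + c)))"
    using DERIV_exp unfolding has_field_derivative_def by blast
  ultimately have "((\<lambda>s::real. exp (\<i> * complex_of_real ((t + s) * \<tau> + c))) has_derivative
     (\<lambda>h. exp (\<i> * complex_of_real ((t + 0) * \<tau> + c)) * (\<i> * complex_of_real (h * \<tau>)))) (at 0)"
    using has_derivative_compose by fastforce
  then show ?thesis
    by (rule has_derivative_eq_rhs) (simp add: fun_eq_iff scaleR_conv_of_real algebra_simps)
qed

lemma dt_plane_wave:
  "dt (\<lambda>t y. cscale (plane_wave (t * \<tau>) \<xi> y) w) =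
    (\<lambda>t y. cscale (plane_wave (t * \<tau>) \<xi> y) (cscale (\<i> * complex_of_real \<tau>) w))"
proof (intro ext)
  fix t y
  have L: "bounded_linear (\<lambda>z. cscale z w)"
    using bounded_bilinear.bounded_linear_left[OF bounded_bilinear_cscale] .
  have "((\<lambda>s. cscale (exp (\<i> * complex_of_real ((t + s) * \<tau> + y \<bullet> \<xi>))) w) has_derivative
     (\<lambda>h. cscale (h *\<^sub>R (\<i> * complex_of_real \<tau> * exp (\<i> * complex_of_real (t * \<tau> + y \<bullet> \<xi>)))) w)) (at 0)"
    using bounded_linear.has_derivative[OF L exp_time_has_derivative] .
  then have "((\<lambda>s. cscale (exp (\<i> * complex_of_real ((t + s) * \<tau> + y \<bullet> \<xi>))) w) has_vector_derivative
     (cscale (\<i> * complex_of_real \<tau> * exp (\<i> * complex_of_real (t * \<tau> + y \<bullet> \<xi>))) w)) (at 0)"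
    unfolding has_vector_derivative_def
    by (rule has_derivative_eq_rhs) (simp add: fun_eq_iff linear_cmul[OF bounded_linear.linear[OF L]])
  then show "dt (\<lambda>t y. cscale (plane_wave (t * \<tau>) \<xi> y) w) t y =
      cscale (plane_wave (t * \<tau>) \<xi> y) (cscale (\<i> * complex_of_real \<tau>) w)"
    unfolding dt_def plane_wave_def
    by (subst vector_derivative_at) (auto simp: vec_eq_iff algebra_simps)
qed

lemma pd_plane_wave_mult:
  assumes "f differentiable (at x)" and "g differentiable (at x)"
  shows "pd (\<lambda>y. plane_wave c \<xi> y * (complex_of_real (f y) + \<i> * complex_of_real (g y))) j x =
    plane_wave c \<xi> x * (complex_of_real (pd f j x - \<xi> $ j * g x)
      + \<i> * complex_of_real (\<xi> $ j * f x + pd g j x))"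
  using assms by simp (simp add: algebra_simps)

lemma grad3_plane_wave:
  assumes "f differentiable (at x)" and "g differentiable (at x)"
  shows "grad3 (\<lambda>y. plane_wave c \<xi> y * (complex_of_real (f y) + \<i> * complex_of_real (g y))) x =
    cscale (plane_wave c \<xi> x) (cvec_re_im (grad3 f x - g x *\<^sub>R \<xi>) (f x *\<^sub>R \<xi> + grad3 g x))"
  unfolding grad3_def using assms by (simp add: pd_plane_wave_mult vec_eq_iff algebra_simps)

lemma div3_plane_wave:
  assumes "a differentiable (at x)" and "b differentiable (at x)"
  shows "div3 (\<lambda>y. cscale (plane_wave c \<xi> y) (cvec_re_im (a y) (b y))) x =
    plane_wave c \<xi> x * (complex_of_real (div3 a x - \<xi> \<bullet> b x)
      + \<i> * complex_of_real (\<xi> \<bullet> a x + div3 b x))"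
  unfolding div3_def cscale_nth cvec_re_im_nth
  using assms by (simp add: pd_plane_wave_mult inner_vec_def sum_3 algebra_simps)

lemma curl3_plane_wave:
  assumes "a differentiable (at x)" and "b differentiable (at x)"
  shows "curl3 (\<lambda>y. cscale (plane_wave c \<xi> y) (cvec_re_im (a y) (b y))) x =
    cscale (plane_wave c \<xi> x) (cvec_re_im (curl3 a x - crossv \<xi> (b x)) (crossv \<xi> (a x) + curl3 b x))"
  unfolding curl3_def cscale_nth cvec_re_im_nth
  using assms by (simp add: pd_plane_wave_mult vec_eq_iff forall_3 crossv_def algebra_simps)

lemma curl3_cvec:
  assumes "H differentiable (at x)"
  shows "curl3 (\<lambda>y. cvec (H y)) x = cvec (curl3 H x)"
  unfolding curl3_def cvec_nth using assms by (simp add: vec_eq_iff forall_3)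

lemma crossv_cscale_re_im_cvec:
  "crossv (cscale e (cvec_re_im a b)) (cvec h) = cscale e (cvec_re_im (crossv a h) (crossv b h))"
  by (simp add: vec_eq_iff forall_3 crossv_def algebra_simps)

lemma crossv_cvec_cscale_re_im:
  "crossv (cvec h) (cscale e (cvec_re_im a b)) = cscale e (cvec_re_im (crossv h a) (crossv h b))"
  by (simp add: vec_eq_iff forall_3 crossv_def algebra_simps)

lemma cscale_re_im_add:
  "cscale e (cvec_re_im a b) + cscale e (cvec_re_im a' b') = cscale e (cvec_re_im (a + a') (b + b'))"
  by (simp add: vec_eq_iff algebra_simps)

lemma Pop_inertia_plane_wave:
  "cscale (- complex_of_real (\<rho> x))
      (dt (dt (\<lambda>t y. cscale (plane_wave (t * \<tau>) \<xi> y) (cvec_re_im v 0))) 0 x) =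
    cscale (plane_wave 0 \<xi> x) (cvec_re_im ((\<rho> x * \<tau>^2) *\<^sub>R v) 0)"
  unfolding dt_plane_wave by (simp add: vec_eq_iff power2_eq_square algebra_simps)

lemma Pop_compression_plane_wave:
  assumes "\<And>y. p differentiable (at y)"
  shows "cscale (complex_of_real \<gamma>)
      (grad3 (\<lambda>y. complex_of_real (p y) * div3 (\<lambda>z. cscale (plane_wave 0 \<xi> z) (cvec_re_im v 0)) y) x) =
    cscale (plane_wave 0 \<xi> x)
      (cvec_re_im (- (\<gamma> * (p x * (\<xi> \<bullet> v))) *\<^sub>R \<xi>) ((\<gamma> * (\<xi> \<bullet> v)) *\<^sub>R grad3 p x))"
proof -
  have "div3 (\<lambda>z. cscale (plane_wave 0 \<xi> z) (cvec_re_im v 0)) y =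
      plane_wave 0 \<xi> y * (complex_of_real 0 + \<i> * complex_of_real (\<xi> \<bullet> v))" for y
    using div3_plane_wave[of "\<lambda>y. v" y "\<lambda>y. 0" 0 \<xi>] by (simp add: div3_def)
  then have "(\<lambda>y. complex_of_real (p y) * div3 (\<lambda>z. cscale (plane_wave 0 \<xi> z) (cvec_re_im v 0)) y) =
      (\<lambda>y. plane_wave 0 \<xi> y * (complex_of_real 0 + \<i> * complex_of_real (p y * (\<xi> \<bullet> v))))"
    by (simp add: fun_eq_iff algebra_simps)
  moreover have "grad3 (\<lambda>y. plane_wave 0 \<xi> y *
        (complex_of_real 0 + \<i> * complex_of_real (p y * (\<xi> \<bullet> v)))) x =
      cscale (plane_wave 0 \<xi> x)
        (cvec_re_im (grad3 (\<lambda>y. 0) x - (p x * (\<xi> \<bullet> v)) *\<^sub>R \<xi>) (0 *\<^sub>R \<xi> + grad3 (\<lambda>y. p y * (\<xi> \<bullet> v)) x))"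
    by (rule grad3_plane_wave) (simp_all add: assms)
  ultimately show ?thesis using assms by (simp add: vec_eq_iff grad3_def algebra_simps)
qed

lemma Pop_pressure_gradient_plane_wave:
  assumes "\<And>j y. pd p j differentiable (at y)"
  shows "grad3 (\<lambda>y. \<Sum>j\<in>UNIV.
        cscale (plane_wave 0 \<xi> y) (cvec_re_im v 0) $ j * complex_of_real (pd p j y)) x =
    cscale (plane_wave 0 \<xi> x)
      (cvec_re_im (grad3 (\<lambda>y. \<Sum>j\<in>UNIV. v $ j * pd p j y) x) ((\<Sum>j\<in>UNIV. v $ j * pd p j x) *\<^sub>R \<xi>))"
proof -
  have "(\<lambda>y. \<Sum>j\<in>UNIV. cscale (plane_wave 0 \<xi> y) (cvec_re_im v 0) $ j * complex_of_real (pd p j y)) =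
      (\<lambda>y. plane_wave 0 \<xi> y * (complex_of_real (\<Sum>j\<in>UNIV. v $ j * pd p j y) + \<i> * complex_of_real 0))"
    by (simp add: fun_eq_iff sum_distrib_left algebra_simps)
  moreover have "grad3 (\<lambda>y. plane_wave 0 \<xi> y *
        (complex_of_real (\<Sum>j\<in>UNIV. v $ j * pd p j y) + \<i> * complex_of_real 0)) x =
      cscale (plane_wave 0 \<xi> x) (cvec_re_im (grad3 (\<lambda>y. \<Sum>j\<in>UNIV. v $ j * pd p j y) x - 0 *\<^sub>R \<xi>)
        ((\<Sum>j\<in>UNIV. v $ j * pd p j x) *\<^sub>R \<xi> + grad3 (\<lambda>y. 0) x))"
    by (rule grad3_plane_wave) (simp_all add: assms)
  ultimately show ?thesis by (simp add: vec_eq_iff grad3_def)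
qed

lemma curl3_plane_wave_crossv:
  assumes "\<And>y. H differentiable (at y)"
  shows "curl3 (\<lambda>y. crossv (cscale (plane_wave 0 \<xi> y) (cvec_re_im v 0)) (cvec (H y))) y =
    cscale (plane_wave 0 \<xi> y) (cvec_re_im (curl3 (\<lambda>z. crossv v (H z)) y) (crossv \<xi> (crossv v (H y))))"
  using curl3_plane_wave[of "\<lambda>y. crossv v (H y)" y "\<lambda>y. 0" 0 \<xi>] assms
  by (simp add: crossv_cscale_re_im_cvec curl3_def)

lemma Pop_curl_curl_plane_wave:
  assumes dH: "\<And>y. H differentiable (at y)" and dHj: "\<And>j y. pd H j differentiable (at y)"
  shows "crossv (curl3 (curl3 (\<lambda>y. crossv (cscale (plane_wave 0 \<xi> y) (cvec_re_im v 0)) (cvec (H y)))) x)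
      (cvec (H x)) =
    cscale (plane_wave 0 \<xi> x) (cvec_re_im
      (crossv (curl3 (\<lambda>y. curl3 (\<lambda>z. crossv v (H z)) y) x - crossv \<xi> (crossv \<xi> (crossv v (H x)))) (H x))
      (crossv (crossv \<xi> (curl3 (\<lambda>z. crossv v (H z)) x) + curl3 (\<lambda>z. crossv \<xi> (crossv v (H z))) x) (H x)))"
proof -
  have curl_cross: "curl3 (\<lambda>z. crossv v (H z)) y = curl_of_partials (\<lambda>j. crossv v (pd H j y))" for y
    using dH by (simp add: curl3_eq_curl_of_partials)
  have "curl3 (\<lambda>y. cscale (plane_wave 0 \<xi> y)
        (cvec_re_im (curl3 (\<lambda>z. crossv v (H z)) y) (crossv \<xi> (crossv v (H y))))) x =
      cscale (plane_wave 0 \<xi> x)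
        (cvec_re_im (curl3 (\<lambda>y. curl3 (\<lambda>z. crossv v (H z)) y) x - crossv \<xi> (crossv \<xi> (crossv v (H x))))
          (crossv \<xi> (curl3 (\<lambda>z. crossv v (H z)) x) + curl3 (\<lambda>z. crossv \<xi> (crossv v (H z))) x))"
    by (rule curl3_plane_wave) (simp_all add: curl_cross dH dHj)
  then show ?thesis
    unfolding curl3_plane_wave_crossv[OF dH] by (simp add: crossv_cscale_re_im_cvec)
qed

lemma Pop_current_plane_wave:
  assumes "\<And>y. H differentiable (at y)"
  shows "crossv (curl3 (\<lambda>y. cvec (H y)) x)
      (curl3 (\<lambda>y. crossv (cscale (plane_wave 0 \<xi> y) (cvec_re_im v 0)) (cvec (H y))) x) =
    cscale (plane_wave 0 \<xi> x) (cvec_re_im (crossv (curl3 H x) (curl3 (\<lambda>z. crossv v (H z)) x))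
      (crossv (curl3 H x) (crossv \<xi> (crossv v (H x)))))"
  unfolding curl3_plane_wave_crossv[OF assms] curl3_cvec[OF assms] crossv_cvec_cscale_re_im ..

(* For real v, symbol_re and symbol_im are the real and imaginary parts of the full symbol applied
   to v (see fullsym_eq). *)

definition symbol_re :: "(real^3 \<Rightarrow> real) \<Rightarrow> (real^3 \<Rightarrow> real) \<Rightarrow> (real^3 \<Rightarrow> real^3) \<Rightarrow> real
    \<Rightarrow> real^3 \<Rightarrow> real \<Rightarrow> real^3 \<Rightarrow> real^3 \<Rightarrow> real^3" where
  "symbol_re \<rho> p H \<gamma> x \<tau> \<xi> v = (\<rho> x * \<tau>^2) *\<^sub>R v - (\<gamma> * (p x * (\<xi> \<bullet> v))) *\<^sub>R \<xi>
     + grad3 (\<lambda>y. \<Sum>j\<in>UNIV. v $ j * pd p j y) x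
     + crossv (curl3 (\<lambda>y. curl3 (\<lambda>z. crossv v (H z)) y) x - crossv \<xi> (crossv \<xi> (crossv v (H x)))) (H x)
     + crossv (curl3 H x) (curl3 (\<lambda>z. crossv v (H z)) x)"

definition symbol_im :: "(real^3 \<Rightarrow> real) \<Rightarrow> (real^3 \<Rightarrow> real^3) \<Rightarrow> real
    \<Rightarrow> real^3 \<Rightarrow> real^3 \<Rightarrow> real^3 \<Rightarrow> real^3" where
  "symbol_im p H \<gamma> x \<xi> v = (\<gamma> * (\<xi> \<bullet> v)) *\<^sub>R grad3 p x + (\<Sum>j\<in>UNIV. v $ j * pd p j x) *\<^sub>R \<xi>
     + crossv (crossv \<xi> (curl3 (\<lambda>z. crossv v (H z)) x) + curl3 (\<lambda>z. crossv \<xi> (crossv v (H z))) x) (H x)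
     + crossv (curl3 H x) (crossv \<xi> (crossv v (H x)))"

lemma Pop_plane_wave:
  assumes "\<And>y. H differentiable (at y)" and "\<And>j y. pd H j differentiable (at y)"
    and "\<And>y. p differentiable (at y)" and "\<And>j y. pd p j differentiable (at y)"
  shows "Pop \<rho> p H \<gamma> (\<lambda>t y. cscale (exp (\<i> * complex_of_real (t * \<tau> + y \<bullet> \<xi>))) (cvec v)) 0 x =
    cscale (plane_wave 0 \<xi> x) (cvec_re_im (symbol_re \<rho> p H \<gamma> x \<tau> \<xi> v) (symbol_im p H \<gamma> x \<xi> v))"
proof -
  have wave: "(\<lambda>t y. cscale (exp (\<i> * complex_of_real (t * \<tau> + y \<bullet> \<xi>))) (cvec v)) =
      (\<lambda>t y. cscale (plane_wave (t * \<tau>) \<xi> y) (cvec_re_im v 0))"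
    by (simp add: plane_wave_def cvec_re_im_def cvec_def fun_eq_iff)
  show ?thesis
    unfolding Pop_def wave mult_zero_left
      Pop_curl_curl_plane_wave[OF assms(1,2)] Pop_current_plane_wave[OF assms(1)]
      Pop_inertia_plane_wave Pop_compression_plane_wave[OF assms(3)]
      Pop_pressure_gradient_plane_wave[OF assms(4)] cscale_re_im_add symbol_re_def symbol_im_def
    by (simp add: algebra_simps)
qed

lemma axis_cvec: "(axis k 1 :: complex^3) = cvec (axis k 1)"
  by (simp add: vec_eq_iff axis_def)

lemma fullsym_eq:
  assumes "\<And>y. H differentiable (at y)" and "\<And>j y. pd H j differentiable (at y)"
    and "\<And>y. p differentiable (at y)" and "\<And>j y. pd p j differentiable (at y)"
  shows "fullsym \<rho> p H \<gamma> x \<tau> \<xi> =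
    (\<chi> i k. cvec_re_im (symbol_re \<rho> p H \<gamma> x \<tau> \<xi> (axis k 1)) (symbol_im p H \<gamma> x \<xi> (axis k 1)) $ i)"
proof -
  have unimodular: "exp (- \<i> * complex_of_real (x \<bullet> \<xi>)) * (plane_wave 0 \<xi> x * z) = z" for z
    by (simp add: plane_wave_def mult.assoc[symmetric] exp_add[symmetric])
  show ?thesis
    unfolding fullsym_def axis_cvec Pop_plane_wave[OF assms] cscale_nth unimodular ..
qed

lemma symbol_re_even: "symbol_re \<rho> p H \<gamma> x (-\<tau>) (-\<xi>) v = symbol_re \<rho> p H \<gamma> x \<tau> \<xi> v"
  by (simp add: symbol_re_def)

lemma symbol_im_odd:
  assumes "\<And>y. H differentiable (at y)"
  shows "symbol_im p H \<gamma> x (-\<xi>) v = - symbol_im p H \<gamma> x \<xi> v"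
  using assms
  by (simp add: symbol_im_def curl3_eq_curl_of_partials curl_of_partials_minus algebra_simps)

lemma scaleR_complex_matrix_nth: "(c *\<^sub>R (M::complex^3^3)) $ i $ k = complex_of_real c * M $ i $ k"
  unfolding vector_scaleR_component by (simp add: scaleR_conv_of_real)

lemma p1sym_eq:
  assumes "\<And>y. H differentiable (at y)" and "\<And>j y. pd H j differentiable (at y)"
    and "\<And>y. p differentiable (at y)" and "\<And>j y. pd p j differentiable (at y)"
  shows "p1sym \<rho> p H \<gamma> x \<tau> \<xi> = (\<chi> i k. \<i> * complex_of_real (symbol_im p H \<gamma> x \<xi> (axis k 1) $ i))"
  unfolding p1sym_def fullsym_eq[OF assms] symbol_re_even symbol_im_odd[OF assms(1)]
  by (simp add: vec_eq_iff scaleR_complex_matrix_nth algebra_simps) (simp add: scaleR_conv_of_real)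

section \<open>The subprincipal symbol is \<open>i\<close> times an antisymmetric real matrix\<close>

definition p2sym_dxi :: "(real^3 \<Rightarrow> real) \<Rightarrow> (real^3 \<Rightarrow> real^3) \<Rightarrow> real
    \<Rightarrow> real^3 \<Rightarrow> real^3 \<Rightarrow> 3 \<Rightarrow> real^3^3" where
  "p2sym_dxi p H \<gamma> \<xi> y j = (- (2 * (H y \<bullet> \<xi>) * H y $ j)) *\<^sub>R mat 1
     - (\<gamma> * p y + H y \<bullet> H y) *\<^sub>R (outer (axis j 1) \<xi> + outer \<xi> (axis j 1))
     + (H y $ j) *\<^sub>R (outer \<xi> (H y) + outer (H y) \<xi>)
     + (H y \<bullet> \<xi>) *\<^sub>R (outer (axis j 1) (H y) + outer (H y) (axis j 1))"

lemma pd_xi_p2sym: "pd (\<lambda>\<eta>. p2sym \<rho> p H \<gamma> y \<tau> \<eta>) j \<xi> = p2sym_dxi p H \<gamma> \<xi> y j"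
  unfolding p2sym_def p2sym_dxi_def power2_norm_eq_inner power2_eq_square
  by (simp add: inner_axis inner_axis' power2_norm_eq_inner)
    (simp add: vec_eq_iff outer_def algebra_simps inner_commute dot_square_norm power2_eq_square)

lemma pd_p2sym_dxi_nth:
  assumes "\<And>y. H differentiable (at y)" and "\<And>y. p differentiable (at y)"
  shows "pd (\<lambda>y. p2sym_dxi p H \<gamma> \<xi> y j) j x $ c $ d =
     - (2 * ((pd H j x \<bullet> \<xi>) * H x $ j + (H x \<bullet> \<xi>) * pd H j x $ j)) * (if c = d then 1 else 0)
     - (\<gamma> * pd p j x + 2 * (H x \<bullet> pd H j x)) * (axis j 1 $ c * \<xi> $ d + \<xi> $ c * axis j 1 $ d)
     + pd H j x $ j * (\<xi> $ c * H x $ d + H x $ c * \<xi> $ d)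
     + H x $ j * (\<xi> $ c * pd H j x $ d + pd H j x $ c * \<xi> $ d)
     + (pd H j x \<bullet> \<xi>) * (axis j 1 $ c * H x $ d + H x $ c * axis j 1 $ d)
     + (H x \<bullet> \<xi>) * (axis j 1 $ c * pd H j x $ d + pd H j x $ c * axis j 1 $ d)"
  unfolding p2sym_dxi_def using assms
  by simp (simp add: outer_def mat_def algebra_simps inner_commute)

definition subprincipal_im :: "(real^3 \<Rightarrow> real) \<Rightarrow> (real^3 \<Rightarrow> real) \<Rightarrow> (real^3 \<Rightarrow> real^3) \<Rightarrow> real
    \<Rightarrow> real^3 \<Rightarrow> real \<Rightarrow> real^3 \<Rightarrow> real^3^3" where
  "subprincipal_im \<rho> p H \<gamma> x \<tau> \<xi> = (\<chi> i k. symbol_im p H \<gamma> x \<xi> (axis k 1) $ i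
     + (\<Sum>j\<in>UNIV. pd (\<lambda>y. pd (\<lambda>\<eta>. p2sym \<rho> p H \<gamma> y \<tau> \<eta>) j \<xi>) j x) $ i $ k / 2)"

lemma psub_eq:
  assumes "\<And>y. H differentiable (at y)" and "\<And>j y. pd H j differentiable (at y)"
    and "\<And>y. p differentiable (at y)" and "\<And>j y. pd p j differentiable (at y)"
  shows "psub \<rho> p H \<gamma> x \<tau> \<xi> = cmscale \<i> (cmat (subprincipal_im \<rho> p H \<gamma> x \<tau> \<xi>))"
  unfolding psub_def p1sym_eq[OF assms]
  by (simp add: vec_eq_iff cmscale_def cmat_def subprincipal_im_def field_simps)

lemma subprincipal_im_antisym:
  assumes dH: "\<And>y. H differentiable (at y)" and dp: "\<And>y. p differentiable (at y)"
    and equilibrium: "grad3 p x + crossv (H x) (curl3 H x) = 0"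
  shows "transpose (subprincipal_im \<rho> p H \<gamma> x \<tau> \<xi>) = - subprincipal_im \<rho> p H \<gamma> x \<tau> \<xi>"
proof -
  have grad_p: "pd p j x = - crossv (H x) (curl_of_partials (\<lambda>j. pd H j x)) $ j" for j
  proof -
    have "grad3 p x $ j + crossv (H x) (curl3 H x) $ j = 0" using equilibrium by (simp add: vec_eq_iff)
    then show ?thesis using curl3_eq_curl_of_partials[OF dH] by (simp add: grad3_def algebra_simps)
  qed
  have "subprincipal_im \<rho> p H \<gamma> x \<tau> \<xi> $ a $ b + subprincipal_im \<rho> p H \<gamma> x \<tau> \<xi> $ b $ a = 0" for a b
    unfolding subprincipal_im_def pd_xi_p2sym symbol_im_def
    using dH
    by (simp add: curl3_eq_curl_of_partials sum_3 pd_p2sym_dxi_nth[OF dH dp] grad_p grad3_def)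
      (use exhaust_3[of a] exhaust_3[of b] in \<open>elim disjE;
        simp add: crossv_def curl_of_partials_def inner_vec_def sum_3 axis_def algebra_simps\<close>)
  then show ?thesis by (simp add: vec_eq_iff transpose_def eq_neg_iff_add_eq_0)
qed

section \<open>The projections have rank one\<close>

lemma inner_vec3: "(u::real^3) \<bullet> v = u $ 1 * v $ 1 + u $ 2 * v $ 2 + u $ 3 * v $ 3"
  by (simp add: inner_vec_def sum_3)

lemma lagrange_identity: "crossv \<xi> (h::real^3) \<bullet> crossv \<xi> h = (\<xi> \<bullet> \<xi>) * (h \<bullet> h) - (h \<bullet> \<xi>)^2"
  unfolding inner_vec3 by (simp add: crossv_def power2_eq_square algebra_simps)

lemma wsq_eq_inner:
  "wsq H x \<xi> = (H x \<bullet> H x) *\<^sub>R outer \<xi> \<xi> + (\<xi> \<bullet> \<xi>) *\<^sub>R outer (H x) (H x)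
     - (H x \<bullet> \<xi>) *\<^sub>R (outer (H x) \<xi> + outer \<xi> (H x))"
  by (simp add: wsq_def power2_norm_eq_inner)

lemma proj1_eq_outer:
  assumes "crossv \<xi> (H x) \<noteq> 0"
  defines "n \<equiv> crossv \<xi> (H x)"
  shows "proj \<rho> p H \<gamma> 1 x \<xi> = (1 / (n \<bullet> n)) *\<^sub>R outer n n"
proof -
  have "n \<bullet> n \<noteq> 0" using assms by simp
  have denominator: "(H x \<bullet> \<xi>)^2 - (norm (H x))^2 * (norm \<xi>)^2 = - (n \<bullet> n)"
    unfolding n_def lagrange_identity power2_norm_eq_inner by simp
  have "(n \<bullet> n) *\<^sub>R mat 1 - wsq H x \<xi> = outer n n"
    unfolding n_def wsq_eq_inner inner_vec3
    by (simp add: vec_eq_iff forall_3 outer_def mat_def crossv_def algebra_simps power2_eq_square)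
  moreover have "proj \<rho> p H \<gamma> 1 x \<xi> = (1 / (n \<bullet> n)) *\<^sub>R ((n \<bullet> n) *\<^sub>R mat 1 - wsq H x \<xi>)"
    using \<open>n \<bullet> n \<noteq> 0\<close> by (simp add: proj_def denominator scaleR_diff_right)
  ultimately show ?thesis by simp
qed

lemma quadratic_root:
  fixes B C D r :: real
  assumes "D^2 = B^2 - 4 * C" and "r = (B - D) / 2 \<or> r = (B + D) / 2"
  shows "r^2 - B * r + C = 0"
proof -
  have "2 * r - B = D \<or> 2 * r - B = - D" using assms(2) by auto
  then have "(2 * r - B)^2 = D^2" by auto
  then have "4 * (r^2 - B * r + C) = 0" using assms(1) by (simp add: power2_eq_square algebra_simps)
  then show ?thesis by simp
qed

lemma wave_speed_root:
  assumes rho: "\<rho> x > 0" and c_pos: "csq \<rho> p \<gamma> x > 0"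
    and r: "r = \<rho> x * cssq \<rho> p H \<gamma> x \<xi> \<or> r = \<rho> x * cfsq \<rho> p H \<gamma> x \<xi>"
  shows "r^2 - (\<gamma> * p x + H x \<bullet> H x) * (\<xi> \<bullet> \<xi>) * r + \<gamma> * p x * (H x \<bullet> \<xi>)^2 * (\<xi> \<bullet> \<xi>) = 0"
proof -
  define g hh n s where "g = \<gamma> * p x" and "hh = H x \<bullet> H x" and "n = \<xi> \<bullet> \<xi>" and "s = H x \<bullet> \<xi>"
  define D where "D = \<rho> x * discr \<rho> p H \<gamma> x \<xi>"
  have norms: "(norm \<xi>)^2 = n" "(norm \<xi>)^4 = n^2" "(norm (H x))^2 = hh"
    "(norm (crossv \<xi> (H x)))^2 = n * hh - s^2"
    using power_mult[of "norm \<xi>" 2 2]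
    by (simp_all add: n_def hh_def s_def power2_norm_eq_inner lagrange_identity)
  have "0 \<le> (n * hh - s^2) / \<rho> x"
    using norms(4) rho by (metis zero_le_power2 less_imp_le divide_nonneg_pos)
  moreover have "0 \<le> g / \<rho> x" using c_pos by (simp add: csq_def g_def)
  moreover have "0 \<le> n" by (simp add: n_def)
  ultimately have "0 \<le> (g / \<rho> x - hh / \<rho> x)^2 * n^2 + 4 * ((n * hh - s^2) / \<rho> x) * (g / \<rho> x) * n"
    by (intro add_nonneg_nonneg mult_nonneg_nonneg) auto
  then have "D^2 = ((g + hh) * n)^2 - 4 * (g * s^2 * n)"
    using rho unfolding D_def discr_def csq_def hsq_def bsq_def norms g_def[symmetric]
    by (simp add: power_mult_distrib field_simps power2_eq_square)
  moreover have "\<rho> x * cssq \<rho> p H \<gamma> x \<xi> = ((g + hh) * n - D) / 2"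
    and "\<rho> x * cfsq \<rho> p H \<gamma> x \<xi> = ((g + hh) * n + D) / 2"
    using rho unfolding D_def cssq_def cfsq_def csq_def hsq_def norms g_def[symmetric]
    by (simp_all add: field_simps)
  then have "r = ((g + hh) * n - D) / 2 \<or> r = ((g + hh) * n + D) / 2" using r by presburger
  ultimately have "r^2 - (g + hh) * n * r + g * s^2 * n = 0" by (rule quadratic_root)
  then show ?thesis unfolding g_def hh_def n_def s_def .
qed

text \<open>The quadratic satisfied by \<open>r\<close> is exactly what turns this combination into a square.\<close>

lemma root_combination_eq_outer:
  fixes h \<xi> :: "real^3" and r s g hh n :: real
  assumes root: "r^2 - (g + hh) * n * r + g * s^2 * n = 0"
    and "r \<noteq> s^2" and "s^2 * n \<noteq> 0"
  defines "u \<equiv> (- r * s) *\<^sub>R \<xi> + (s^2 * n) *\<^sub>R h"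
  shows "((g + hh) *\<^sub>R outer \<xi> \<xi> - s *\<^sub>R (outer \<xi> h + outer h \<xi>))
      + (s^2 / (r - s^2)) *\<^sub>R (hh *\<^sub>R outer \<xi> \<xi> + n *\<^sub>R outer h h - s *\<^sub>R (outer h \<xi> + outer \<xi> h))
    = (1 / ((r - s^2) * (s^2 * n))) *\<^sub>R outer u u"
proof -
  define A where "A = (g + hh) *\<^sub>R outer \<xi> \<xi> - s *\<^sub>R (outer \<xi> h + outer h \<xi>)"
  define W where "W = hh *\<^sub>R outer \<xi> \<xi> + n *\<^sub>R outer h h - s *\<^sub>R (outer h \<xi> + outer \<xi> h)"
  have "(r - s^2) * (s^2 * n) * ((g + hh) * \<xi>$i * \<xi>$k - s * (\<xi>$i * h$k + h$i * \<xi>$k))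
      + s^2 * (s^2 * n) * (hh * \<xi>$i * \<xi>$k + n * h$i * h$k - s * (h$i * \<xi>$k + \<xi>$i * h$k))
    = ((- r * s) * \<xi>$i + (s^2 * n) * h$i) * ((- r * s) * \<xi>$k + (s^2 * n) * h$k)
      - \<xi>$i * \<xi>$k * s^2 * (r^2 - (g + hh) * n * r + g * s^2 * n)" for i k
    by (simp add: algebra_simps power2_eq_square)
  then have square: "((r - s^2) * (s^2 * n)) *\<^sub>R A + (s^2 * (s^2 * n)) *\<^sub>R W = outer u u"
    unfolding root A_def W_def u_def by (simp add: vec_eq_iff outer_def algebra_simps)
  have "1 / ((r - s^2) * (s^2 * n)) * ((r - s^2) * (s^2 * n)) = 1"
    and "1 / ((r - s^2) * (s^2 * n)) * (s^2 * (s^2 * n)) = s^2 / (r - s^2)"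
    using assms(2,3) by (simp_all add: field_simps power2_eq_square)
  then have "A + (s^2 / (r - s^2)) *\<^sub>R W =
      (1 / ((r - s^2) * (s^2 * n))) *\<^sub>R (((r - s^2) * (s^2 * n)) *\<^sub>R A + (s^2 * (s^2 * n)) *\<^sub>R W)"
    by (simp only: scaleR_add_right scaleR_scaleR scaleR_one)
  then show ?thesis unfolding square by (simp add: A_def W_def)
qed

lemma proj_rank_one:
  assumes rho: "\<rho> x > 0" and c_pos: "csq \<rho> p \<gamma> x > 0"
    and xiH: "\<xi> \<bullet> H x \<noteq> 0" and xixH: "crossv \<xi> (H x) \<noteq> 0" and j: "j \<in> {1, 2, 3}"
  shows "\<exists>c u. proj \<rho> p H \<gamma> j x \<xi> = c *\<^sub>R outer u u"
proof -
  define g hh n s where "g = \<gamma> * p x" and "hh = H x \<bullet> H x" and "n = \<xi> \<bullet> \<xi>" and "s = H x \<bullet> \<xi>"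
  define rs rf where "rs = \<rho> x * cssq \<rho> p H \<gamma> x \<xi>" and "rf = \<rho> x * cfsq \<rho> p H \<gamma> x \<xi>"
  have "s \<noteq> 0" and "n \<noteq> 0" using xiH by (auto simp: s_def n_def inner_commute)
  then have nondegenerate: "s^2 * n \<noteq> 0" by simp
  have "crossv \<xi> (H x) \<bullet> crossv \<xi> (H x) \<noteq> 0" using xixH by simp
  then have "n * hh - s^2 \<noteq> 0" by (simp add: lagrange_identity n_def hh_def s_def)
  then have root_ne: "r \<noteq> s^2" if "r^2 - (g + hh) * n * r + g * s^2 * n = 0" for r
    using that \<open>s \<noteq> 0\<close> by (auto simp: algebra_simps power2_eq_square)
  have combination: "\<exists>c u. c' *\<^sub>R ((g + hh) *\<^sub>R outer \<xi> \<xi> - s *\<^sub>R (outer \<xi> (H x) + outer (H x) \<xi>)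
      + (s^2 / (r - s^2)) *\<^sub>R wsq H x \<xi>) = c *\<^sub>R outer u u"
    if "r = rs \<or> r = rf" for r c'
  proof -
    have root: "r^2 - (g + hh) * n * r + g * s^2 * n = 0"
      using wave_speed_root[OF rho c_pos] that by (auto simp: rs_def rf_def g_def hh_def n_def s_def)
    show ?thesis
      unfolding wsq_eq_inner hh_def[symmetric] n_def[symmetric] s_def[symmetric]
        root_combination_eq_outer[OF root root_ne[OF root] nondegenerate] scaleR_scaleR
      by blast
  qed
  consider "j = 1" | "j = 2" | "j = 3" using j by blast
  then show ?thesis
  proof cases
    case 1
    then show ?thesis using proj1_eq_outer[of \<xi> H x \<rho> p \<gamma>] xixH by blast
  next
    case 2
    then show ?thesis using combination[of rs "1 / (rs - rf)"]
      unfolding proj_def Let_def power2_norm_eq_inner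
      by (simp add: rs_def rf_def g_def hh_def s_def)
  next
    case 3
    then show ?thesis using combination[of rf "1 / (rf - rs)"]
      unfolding proj_def Let_def power2_norm_eq_inner
      by (simp add: rs_def rf_def g_def hh_def s_def)
  qed
qed

lemma rank_one_sandwich_antisym:
  fixes M :: "real^3^3"
  assumes "transpose M = - M"
  shows "cmat (c *\<^sub>R outer u u) ** cmscale \<i> (cmat M) ** cmat (c *\<^sub>R outer u u) = 0"
proof -
  have "M $ i $ k = - M $ k $ i" for i k
    using arg_cong[OF assms, of "\<lambda>A. A $ k $ i"] by (simp add: transpose_def)
  then have "M $ i $ i = 0"
    and "M $ 2 $ 1 = - M $ 1 $ 2" "M $ 3 $ 1 = - M $ 1 $ 3" "M $ 3 $ 2 = - M $ 2 $ 3"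
    for i by (metis add.inverse_inverse neg_equal_zero)+
  then show ?thesis
    by (simp add: vec_eq_iff matrix_matrix_mult_def sum_3 cmat_def cmscale_def outer_def algebra_simps)
qed

lemma ptilde_eq_proj:
  assumes "qfac \<rho> p H \<gamma> j x \<tau> \<xi> = 0"
  shows "ptilde \<rho> p H \<gamma> j x \<tau> \<xi> = proj \<rho> p H \<gamma> j x \<xi>"
  unfolding ptilde_def assms by simp

theorem lemma5p4:
  fixes \<rho> p :: "real^3 \<Rightarrow> real" and H :: "real^3 \<Rightarrow> real^3" and \<gamma> :: real
    and j :: nat and x :: "real^3" and \<tau> :: real and \<xi> :: "real^3"
  assumes smooth_rho: "smooth3 \<rho>" and smooth_p: "smooth3 p" and smooth_H: "smooth3 H"
    and rho_pos: "\<forall>y. \<rho> y > 0"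
    and equilibrium: "\<forall>y. grad3 p y + crossv (H y) (curl3 H y) = 0"
    and c_pos: "\<forall>y. csq \<rho> p \<gamma> y > 0"
    and H_pos: "\<forall>y. 0 < (norm (H y))^2"
    and H_ne: "\<forall>y. (norm (H y))^2 \<noteq> \<rho> y * csq \<rho> p \<gamma> y"
    and xiH: "\<xi> \<bullet> H x \<noteq> 0"
    and xixH: "crossv \<xi> (H x) \<noteq> 0"
    and j: "j \<in> {1, 2, 3}"
    and char: "qfac \<rho> p H \<gamma> j x \<tau> \<xi> = 0"
  shows "cmat (ptilde \<rho> p H \<gamma> j x \<tau> \<xi>) ** psub \<rho> p H \<gamma> x \<tau> \<xi> ** cmat (proj \<rho> p H \<gamma> j x \<xi>) = 0"
proof -
  have dH: "\<And>y. H differentiable (at y)" and dHj: "\<And>j y. pd H j differentiable (at y)"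
    and dp: "\<And>y. p differentiable (at y)" and dpj: "\<And>j y. pd p j differentiable (at y)"
    using smooth3_differentiable smooth3_pd_differentiable smooth_H smooth_p by blast+
  obtain c u where rank_one: "proj \<rho> p H \<gamma> j x \<xi> = c *\<^sub>R outer u u"
    using proj_rank_one[of \<rho> x p \<gamma> \<xi> H j] rho_pos c_pos xiH xixH j by blast
  have "transpose (subprincipal_im \<rho> p H \<gamma> x \<tau> \<xi>) = - subprincipal_im \<rho> p H \<gamma> x \<tau> \<xi>"
    using subprincipal_im_antisym[OF dH dp] equilibrium by blast
  then show ?thesis
    unfolding ptilde_eq_proj[OF char] rank_one psub_eq[OF dH dHj dp dpj]
    by (rule rank_one_sandwich_antisym)
qed

end
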